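(* There is an absolute constant $C>0$ such that for every $n\in\mathbb{N}$, every nonempty $B\subseteq[n]$ and every $\varepsilon\in(0,1)$, there is a randomized nonadaptive algorithm which, given oracle access to $g:B\to\mathbb{R}$, makes at most $C\cdot\max\{1,\log_2(\varepsilon|B|)\}$ queries, accepts with probability $1$ whenever $g$ is convex, and rejects with probability at least $\varepsilon$ whenever $g$ is $\varepsilon$-far from convex.
   Context: For a finite set $B\subseteq\mathbb{R}$, $g:B\to\mathbb{R}$ is convex if $\frac{g(y)-g(x)}{y-x}\le\frac{g(z)-g(y)}{z-y}$ for all $x<y<z$ in $B$ (using the actual positions of the points). $g$ is $\varepsilon$-far from convex if every convex $h:B\to\mathbb{R}$ differs from $g$ on at least $\varepsilon|B|$ points of $B$. Nonadaptive means all query points are chosen (randomly) before any answer is seen. *)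

theory Defs
  imports "HOL-Probability.Probability_Mass_Function"
begin

definition convex_on_pts :: "nat set \<Rightarrow> (nat \<Rightarrow> real) \<Rightarrow> bool" where
  "convex_on_pts B g \<longleftrightarrow>
     (\<forall>x\<in>B. \<forall>y\<in>B. \<forall>z\<in>B. x < y \<and> y < z \<longrightarrow>
        (g y - g x) / (real y - real x) \<le> (g z - g y) / (real z - real y))"

definition eps_far_from_convex :: "nat set \<Rightarrow> real \<Rightarrow> (nat \<Rightarrow> real) \<Rightarrow> bool" where
  "eps_far_from_convex B eps g \<longleftrightarrow>
     (\<forall>h. convex_on_pts B h \<longrightarrow> real (card {x\<in>B. g x \<noteq> h x}) \<ge> eps * real (card B))"

text \<open>A randomized nonadaptive algorithm on domain B is a probability distribution over pairs
  (Q, D): a query set Q and a decision rule D (True = accept) which only depends on the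
  oracle's answers on Q. The randomness is chosen before any query is answered.\<close>
definition nonadaptive_alg :: "nat set \<Rightarrow> nat \<Rightarrow> (nat set \<times> ((nat \<Rightarrow> real) \<Rightarrow> bool)) pmf \<Rightarrow> bool" where
  "nonadaptive_alg B q A \<longleftrightarrow>
     (\<forall>(Q, D) \<in> set_pmf A. Q \<subseteq> B \<and> finite Q \<and> card Q \<le> q \<and>
        (\<forall>g h. (\<forall>x\<in>Q. g x = h x) \<longrightarrow> D g = D h))"

definition accept_prob :: "(nat set \<times> ((nat \<Rightarrow> real) \<Rightarrow> bool)) pmf \<Rightarrow> (nat \<Rightarrow> real) \<Rightarrow> real" where
  "accept_prob A g = measure_pmf.prob A {a. snd a g}"

end

theory Submission
  imports Defs
begin

text \<open>
  The tester picks x uniformly in B and checks convexity of g on a window of O(L) points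
  around x, where 2^L is about \<epsilon>|B|: for both dyadic grids on the ranks (unshifted and
  shifted by 2^L) and every scale 2^t \<le> 2^L, the two ranks on either side of the midpoint of
  the dyadic block containing rank x. Convex functions always pass.
  Conversely let G be the set of points whose window passes, and suppose fewer than \<epsilon>|B|
  points fail. Consecutive points of G are then less than 2^L ranks apart, so some grid and scale
  separates them, and the corresponding adjacent pair of B lies in the windows of all points
  in between. Chaining the convexity of these windows through such pairs shows that g is
  convex on every consecutive triple of G, hence on G. Finally a convex function on G extends
  to a convex function on all points (the maximum of the chords through consecutive points
  of G), so g is \<epsilon>-close to convex.
\<close>

section \<open>Slopes and convexity on finite sets of points\<close>

definition slope :: "(nat \<Rightarrow> real) \<Rightarrow> nat \<Rightarrow> nat \<Rightarrow> real" where
  "slope g x y = (g y - g x) / (real y - real x)"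

lemma slope_le_slope_iff:
  assumes "x < y" "y < z"
  shows "slope g x y \<le> slope g y z \<longleftrightarrow> slope g x y \<le> slope g x z"
    and "slope g x y \<le> slope g y z \<longleftrightarrow> slope g x z \<le> slope g y z"
  using assms by (simp_all add: slope_def field_simps)

lemma convex_on_pts_slope_le:
  assumes "convex_on_pts T g" "x \<in> T" "y \<in> T" "z \<in> T" "x < y" "y < z"
  shows "slope g x y \<le> slope g y z"
  using assms unfolding convex_on_pts_def slope_def by blast

lemma convex_on_pts_slope_mono:
  assumes conv: "convex_on_pts T g" and T: "p \<in> T" "q \<in> T" "r \<in> T" "s \<in> T"
    and "p < q" "r < s" "p \<le> r" "q \<le> s"
  shows "slope g p q \<le> slope g r s"
proof -
  have "slope g p q \<le> slope g p s"
    using convex_on_pts_slope_le[OF conv T(1,2,4)] slope_le_slope_iff(1)[of p q s g] assms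
    by (cases "q = s") auto
  also have "\<dots> \<le> slope g r s"
    using convex_on_pts_slope_le[OF conv T(1,3,4)] slope_le_slope_iff(2)[of p r s g] assms
    by (cases "p = r") auto
  finally show ?thesis .
qed

lemma convex_on_pts_subset: "convex_on_pts T g \<Longrightarrow> S \<subseteq> T \<Longrightarrow> convex_on_pts S g"
  unfolding convex_on_pts_def by blast

lemma convex_on_pts_cong: "(\<And>x. x \<in> T \<Longrightarrow> g x = h x) \<Longrightarrow> convex_on_pts T g = convex_on_pts T h"
  unfolding convex_on_pts_def by simp

lemma convex_on_pts_if_consecutive:
  assumes consec: "\<And>a b c. a \<in> G \<Longrightarrow> b \<in> G \<Longrightarrow> c \<in> G \<Longrightarrow> a < b \<Longrightarrow> b < c \<Longrightarrow>
     \<forall>d\<in>G. \<not> (a < d \<and> d < b) \<Longrightarrow> \<forall>d\<in>G. \<not> (b < d \<and> d < c) \<Longrightarrow> slope g a b \<le> slope g b c"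
  shows "convex_on_pts G g"
proof -
  have "slope g a b \<le> slope g b c" if "a \<in> G" "b \<in> G" "c \<in> G" "a < b" "b < c" for a b c
    using that
  proof (induction "c - a" arbitrary: a b c rule: less_induct)
    case less
    show ?case
    proof (cases "\<exists>d\<in>G. a < d \<and> d < b")
      case True
      then obtain d where d: "d \<in> G" "a < d" "d < b" by blast
      have "slope g a d \<le> slope g d b" "slope g d b \<le> slope g b c"
        using less.hyps[of b a d] less.hyps[of c d b] less.prems d by auto
      then show ?thesis using slope_le_slope_iff(2)[of a d b g] d by linarith
    next
      case no_left: False
      show ?thesis
      proof (cases "\<exists>d\<in>G. b < d \<and> d < c")
        case True
        then obtain d where d: "d \<in> G" "b < d" "d < c" by blast
        have "slope g a b \<le> slope g b d" "slope g b d \<le> slope g d c"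
          using less.hyps[of d a b] less.hyps[of c b d] less.prems d by auto
        then show ?thesis using slope_le_slope_iff(1)[of b d c g] d by linarith
      next
        case False
        then show ?thesis using no_left consec less.prems by blast
      qed
    qed
  qed
  then show ?thesis unfolding convex_on_pts_def slope_def by blast
qed

lemma slope_le_slope_of_right_pair:
  assumes Tb: "convex_on_pts Tb g" "b \<in> Tb" "w1 \<in> Tb" "w2 \<in> Tb"
    and Tc: "convex_on_pts Tc g" "w1 \<in> Tc" "w2 \<in> Tc" "c \<in> Tc"
    and "b \<le> w1" "w1 < w2" "w2 \<le> c"
  shows "slope g b w2 \<le> slope g b c"
proof (cases "w2 = c")
  case False
  have "slope g b w2 \<le> slope g w1 w2"
    using convex_on_pts_slope_mono[OF Tb(1,2,4,3,4)] assms by auto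
  also have "\<dots> \<le> slope g w2 c"
    using convex_on_pts_slope_mono[OF Tc(1,2,3,3,4)] False assms by auto
  finally show ?thesis using slope_le_slope_iff(1)[of b w2 c g] False assms by auto
qed simp

lemma slope_le_slope_of_left_pair:
  assumes Ta: "convex_on_pts Ta g" "a \<in> Ta" "w1 \<in> Ta" "w2 \<in> Ta"
    and Tb: "convex_on_pts Tb g" "w1 \<in> Tb" "w2 \<in> Tb" "b \<in> Tb"
    and "a \<le> w1" "w1 < w2" "w2 \<le> b"
  shows "slope g a b \<le> slope g w1 b"
proof (cases "a = w1")
  case False
  have "slope g a w1 \<le> slope g w1 w2"
    using convex_on_pts_slope_mono[OF Ta(1,2,3,3,4)] False assms by auto
  also have "\<dots> \<le> slope g w1 b"
    using convex_on_pts_slope_mono[OF Tb(1,2,3,2,4)] assms by auto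
  finally show ?thesis using slope_le_slope_iff(2)[of a w1 b g] False assms by auto
qed simp

text \<open>The pair w1 < w2 found for (a, c) lies on one side of b, say to its right. With the pair
  v1 < v2 found for (a, b) this gives slope a b \<le> slope v1 b \<le> slope b w2 \<le> slope b c,
  each step using convexity on a single window.\<close>
lemma slope_le_slope_of_covering_windows:
  assumes win: "\<And>x. x \<in> {a, b, c} \<Longrightarrow> convex_on_pts (T x) g \<and> x \<in> T x"
    and "a < b" "b < c"
    and pair: "\<And>u v. u \<in> {a, b, c} \<Longrightarrow> v \<in> {a, b, c} \<Longrightarrow> u < v \<Longrightarrow>
       \<exists>w1 w2. u \<le> w1 \<and> w1 < w2 \<and> w2 \<le> v \<and> \<not> (w1 < b \<and> b < w2) \<and>
         (\<forall>y\<in>{a, b, c}. u \<le> y \<and> y \<le> v \<longrightarrow> w1 \<in> T y \<and> w2 \<in> T y)"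
  shows "slope g a b \<le> slope g b c"
proof -
  have Ta: "convex_on_pts (T a) g" "a \<in> T a" and Tb: "convex_on_pts (T b) g" "b \<in> T b"
    and Tc: "convex_on_pts (T c) g" "c \<in> T c"
    using win by auto
  obtain w1 w2 where w: "a \<le> w1" "w1 < w2" "w2 \<le> c" "\<not> (w1 < b \<and> b < w2)"
    and w_in: "\<forall>y\<in>{a, b, c}. a \<le> y \<and> y \<le> c \<longrightarrow> w1 \<in> T y \<and> w2 \<in> T y"
    using pair[of a c] assms(2,3) by auto
  have wa: "w1 \<in> T a" "w2 \<in> T a" and wb: "w1 \<in> T b" "w2 \<in> T b" and wc: "w1 \<in> T c" "w2 \<in> T c"
    using w_in assms(2,3) by auto
  consider "b \<le> w1" | "w2 \<le> b" using w(4) by linarith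
  then show ?thesis
  proof cases
    case 1
    obtain v1 v2 where v: "a \<le> v1" "v1 < v2" "v2 \<le> b"
      and v_in: "\<forall>y\<in>{a, b, c}. a \<le> y \<and> y \<le> b \<longrightarrow> v1 \<in> T y \<and> v2 \<in> T y"
      using pair[of a b] assms(2) by blast
    have va: "v1 \<in> T a" "v2 \<in> T a" and vb: "v1 \<in> T b" "v2 \<in> T b" using v_in assms(2) by auto
    have "slope g a b \<le> slope g v1 b"
      by (rule slope_le_slope_of_left_pair[OF Ta va Tb(1) vb Tb(2) v])
    also have "\<dots> \<le> slope g b w2"
      using convex_on_pts_slope_mono[OF Tb(1) vb(1) Tb(2) Tb(2) wb(2)] v w 1 by auto
    also have "\<dots> \<le> slope g b c"
      using slope_le_slope_of_right_pair[OF Tb wb Tc(1) wc Tc(2)] 1 w by auto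
    finally show ?thesis .
  next
    case 2
    obtain z1 z2 where z: "b \<le> z1" "z1 < z2" "z2 \<le> c"
      and z_in: "\<forall>y\<in>{a, b, c}. b \<le> y \<and> y \<le> c \<longrightarrow> z1 \<in> T y \<and> z2 \<in> T y"
      using pair[of b c] assms(3) by blast
    have zb: "z1 \<in> T b" "z2 \<in> T b" and zc: "z1 \<in> T c" "z2 \<in> T c" using z_in assms(3) by auto
    have "slope g a b \<le> slope g w1 b"
      using slope_le_slope_of_left_pair[OF Ta wa Tb(1) wb Tb(2)] 2 w by auto
    also have "\<dots> \<le> slope g b z2"
      using convex_on_pts_slope_mono[OF Tb(1) wb(1) Tb(2) Tb(2) zb(2)] z w 2 by auto
    also have "\<dots> \<le> slope g b c"
      by (rule slope_le_slope_of_right_pair[OF Tb(1,2) zb Tc(1) zc Tc(2) z])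
    finally show ?thesis .
  qed
qed

section \<open>Extension of convex functions\<close>

lemma convex_on_pts_if_supporting_lines:
  fixes h :: "nat \<Rightarrow> real"
  assumes support: "\<And>y. \<exists>\<alpha> \<beta>. h y = \<alpha> + \<beta> * real y \<and> (\<forall>x. \<alpha> + \<beta> * real x \<le> h x)"
  shows "convex_on_pts T h"
  unfolding convex_on_pts_def
proof (intro ballI impI)
  fix x y z :: nat assume "x < y \<and> y < z"
  then have xy: "real y - real x > 0" and yz: "real z - real y > 0" by auto
  obtain \<alpha> \<beta> where at_y: "h y = \<alpha> + \<beta> * real y" and below: "\<forall>x. \<alpha> + \<beta> * real x \<le> h x"
    using support by blast
  have "(\<alpha> + \<beta> * real x) * (real z - real y) \<le> h x * (real z - real y)"
    "(\<alpha> + \<beta> * real z) * (real y - real x) \<le> h z * (real y - real x)"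
    using below xy yz by (intro mult_right_mono; simp)+
  then have "(h y - h x) * (real z - real y) \<le> (h z - h y) * (real y - real x)"
    unfolding at_y by (simp add: algebra_simps)
  then show "(h y - h x) / (real y - real x) \<le> (h z - h y) / (real z - real y)"
    using xy yz by (simp add: field_simps)
qed

definition chord_line :: "(nat \<Rightarrow> real) \<Rightarrow> nat \<Rightarrow> nat \<Rightarrow> nat \<Rightarrow> real" where
  "chord_line g a b x = g a + slope g a b * (real x - real a)"

lemma chord_line_left [simp]: "chord_line g a b a = g a"
  unfolding chord_line_def by simp

lemma chord_line_right [simp]: "a < b \<Longrightarrow> chord_line g a b b = g b"
  unfolding chord_line_def slope_def by (simp add: field_simps)

lemma chord_line_le_outside:
  assumes conv: "convex_on_pts G g" and G: "a \<in> G" "b \<in> G" "c \<in> G" and "a < b"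
    and outside: "\<not> (a < c \<and> c < b)"
  shows "chord_line g a b c \<le> g c"
proof -
  consider "c < a" | "c = a" | "c = b" | "b < c" using outside by linarith
  then show ?thesis
  proof cases
    case 1
    then have "(g a - g c) / (real a - real c) \<le> slope g a b"
      using convex_on_pts_slope_le[OF conv G(3,1,2)] \<open>a < b\<close> unfolding slope_def by simp
    then have "g a - g c \<le> slope g a b * (real a - real c)" using 1 by (simp add: pos_divide_le_eq)
    then show ?thesis unfolding chord_line_def by (simp add: algebra_simps)
  next
    case 4
    then have "slope g a b \<le> (g c - g b) / (real c - real b)"
      using convex_on_pts_slope_le[OF conv G] \<open>a < b\<close> unfolding slope_def by simp
    then have "slope g a b * (real c - real b) \<le> g c - g b" using 4 by (simp add: pos_le_divide_eq)
    moreover have "chord_line g a b c = g b + slope g a b * (real c - real b)"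
      using \<open>a < b\<close> unfolding chord_line_def slope_def by (simp add: field_simps)
    ultimately show ?thesis by simp
  qed (use \<open>a < b\<close> in simp_all)
qed

lemma obtain_next_in:
  fixes G :: "nat set"
  assumes "finite G" "d \<in> G" "c < d"
  obtains e where "e \<in> G" "c < e" "\<forall>x\<in>G. \<not> (c < x \<and> x < e)"
proof -
  have S: "finite {x\<in>G. c < x}" "{x\<in>G. c < x} \<noteq> {}" using assms by auto
  show ?thesis
  proof (rule that)
    show "Min {x\<in>G. c < x} \<in> G" "c < Min {x\<in>G. c < x}" using Min_in[OF S] by auto
    show "\<forall>x\<in>G. \<not> (c < x \<and> x < Min {x\<in>G. c < x})" using Min_le[OF S(1)] by force
  qed
qed

lemma obtain_prev_in:
  fixes G :: "nat set"
  assumes "finite G" "d \<in> G" "d < c"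
  obtains e where "e \<in> G" "e < c" "\<forall>x\<in>G. \<not> (e < x \<and> x < c)"
proof -
  have S: "finite {x\<in>G. x < c}" "{x\<in>G. x < c} \<noteq> {}" using assms by auto
  show ?thesis
  proof (rule that)
    show "Max {x\<in>G. x < c} \<in> G" "Max {x\<in>G. x < c} < c" using Max_in[OF S] by auto
    show "\<forall>x\<in>G. \<not> (Max {x\<in>G. x < c} < x \<and> x < c)"
      using Max_ge[OF S(1)] by (auto simp: not_less[symmetric])
  qed
qed

lemma convex_on_pts_extension:
  fixes g :: "nat \<Rightarrow> real"
  assumes fin: "finite G" and conv: "convex_on_pts G g"
  shows "\<exists>h. convex_on_pts UNIV h \<and> (\<forall>x\<in>G. h x = g x)"
proof (cases "\<exists>a\<in>G. \<exists>b\<in>G. a < b")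
  case False
  define x0 where "x0 = (SOME x. x \<in> G)"
  have "x0 = c" if "c \<in> G" for c
  proof -
    have "x0 \<in> G" unfolding x0_def using that by (rule someI)
    then show ?thesis using False that nat_neq_iff by blast
  qed
  moreover have "convex_on_pts UNIV (\<lambda>_. g x0)" unfolding convex_on_pts_def by simp
  ultimately show ?thesis by (intro exI[of _ "\<lambda>_. g x0"]) simp
next
  case True
  define P where "P = {(a, b). a \<in> G \<and> b \<in> G \<and> a < b \<and> (\<forall>d\<in>G. \<not> (a < d \<and> d < b))}"
  have "finite P" unfolding P_def by (rule finite_subset[of _ "G \<times> G"]) (use fin in auto)
  have succ: "\<exists>b. (c, b) \<in> P" if "c \<in> G" "d \<in> G" "c < d" for c d
    using obtain_next_in[OF fin that(2,3)] that(1) unfolding P_def by blast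
  have pred: "\<exists>a. (a, c) \<in> P" if "c \<in> G" "d \<in> G" "d < c" for c d
    using obtain_prev_in[OF fin that(2,3)] that(1) unfolding P_def by blast
  have "P \<noteq> {}" using True succ by blast
  define h where "h x = Max ((\<lambda>(a, b). chord_line g a b x) ` P)" for x
  have h_ge: "chord_line g a b x \<le> h x" if "(a, b) \<in> P" for a b x
    unfolding h_def using \<open>finite P\<close> that by (intro Max_ge) force+
  have h_attained: "\<exists>(a, b)\<in>P. h x = chord_line g a b x" for x
  proof -
    have "h x \<in> (\<lambda>(a, b). chord_line g a b x) ` P"
      unfolding h_def using \<open>finite P\<close> \<open>P \<noteq> {}\<close> by (intro Max_in) auto
    then show ?thesis by auto
  qed
  have "convex_on_pts UNIV h"
  proof (rule convex_on_pts_if_supporting_lines)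
    fix y
    obtain a b where "(a, b) \<in> P" "h y = chord_line g a b y" using h_attained by blast
    then show "\<exists>\<alpha> \<beta>. h y = \<alpha> + \<beta> * real y \<and> (\<forall>x. \<alpha> + \<beta> * real x \<le> h x)"
      using h_ge unfolding chord_line_def
      by (intro exI[of _ "g a - slope g a b * real a"] exI[of _ "slope g a b"]) (fastforce simp: algebra_simps)
  qed
  moreover have "h c = g c" if c: "c \<in> G" for c
  proof (rule antisym)
    obtain a b where ab: "(a, b) \<in> P" "h c = chord_line g a b c" using h_attained by blast
    then have "a \<in> G" "b \<in> G" "a < b" "\<not> (a < c \<and> c < b)" using c unfolding P_def by auto
    then show "h c \<le> g c" using chord_line_le_outside[OF conv _ _ c] ab(2) by simp
    show "g c \<le> h c"
    proof (cases "\<exists>d\<in>G. c < d")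
      case True
      then obtain b where "(c, b) \<in> P" using succ[OF c] by blast
      then show ?thesis using h_ge[of c b c] by simp
    next
      case False
      then obtain d where "d \<in> G" "d < c" using True c by (metis linorder_neqE_nat)
      then obtain a where "(a, c) \<in> P" using pred[OF c] by blast
      moreover from this have "a < c" unfolding P_def by blast
      ultimately show ?thesis using h_ge[of a c c] by simp
    qed
  qed
  ultimately show ?thesis by blast
qed

section \<open>Dyadic split points\<close>

definition dyadic_mid :: "nat \<Rightarrow> nat \<Rightarrow> nat" where
  "dyadic_mid t m = m div 2 ^ Suc t * 2 ^ Suc t + 2 ^ t"

lemma dyadic_mid_separates:
  fixes i k :: nat
  assumes "i < k" "i div 2 ^ Suc L = k div 2 ^ Suc L"
  shows "\<exists>t\<le>L. i < dyadic_mid t i \<and> dyadic_mid t i \<le> k \<and>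
           (\<forall>l\<in>{i..k}. dyadic_mid t l = dyadic_mid t i)"
proof -
  define t where "t = (LEAST t. i div 2 ^ Suc t = k div 2 ^ Suc t)"
  have same: "i div 2 ^ Suc t = k div 2 ^ Suc t" unfolding t_def using assms(2) by (rule LeastI)
  have "t \<le> L" unfolding t_def using assms(2) by (rule Least_le)
  have differ: "i div 2 ^ t \<noteq> k div 2 ^ t"
  proof (cases t)
    case (Suc t')
    have "t' < t" using Suc by simp
    then have "i div 2 ^ Suc t' \<noteq> k div 2 ^ Suc t'" unfolding t_def by (rule not_less_Least)
    then show ?thesis using Suc by simp
  qed (use assms in simp)
  define D where "D = i div 2 ^ Suc t"
  have "i div 2 ^ t \<le> k div 2 ^ t" using assms(1) by (simp add: div_le_mono)
  moreover have "i div 2 ^ t div 2 = D" "k div 2 ^ t div 2 = D"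
    using same unfolding D_def by (simp_all only: div_mult2_eq power_Suc2)
  ultimately have "i div 2 ^ t = 2 * D" "k div 2 ^ t = 2 * D + 1" using differ by linarith+
  moreover have "i < (i div 2 ^ t + 1) * 2 ^ t" using dividend_less_div_times[of "2 ^ t" i] by simp
  moreover have "k div 2 ^ t * 2 ^ t \<le> k" by simp
  ultimately have "i < D * 2 ^ Suc t + 2 ^ t" "D * 2 ^ Suc t + 2 ^ t \<le> k"
    by (simp_all add: algebra_simps)
  moreover have mid: "dyadic_mid t i = D * 2 ^ Suc t + 2 ^ t" unfolding dyadic_mid_def D_def ..
  moreover have "dyadic_mid t l = dyadic_mid t i" if "i \<le> l" "l \<le> k" for l
  proof -
    have "l div 2 ^ Suc t = D"
      using div_le_mono[OF that(1), of "2 ^ Suc t"] div_le_mono[OF that(2), of "2 ^ Suc t"] same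
      unfolding D_def by linarith
    then show ?thesis unfolding dyadic_mid_def D_def by simp
  qed
  ultimately show ?thesis using \<open>t \<le> L\<close> by (metis atLeastAtMost_iff)
qed

lemma shift_into_dyadic_block:
  fixes i k :: nat
  assumes "i < k" "k < i + 2 ^ L"
  shows "\<exists>s\<in>{0, 2 ^ L}. (i + s) div 2 ^ Suc L = (k + s) div 2 ^ Suc L"
proof (cases "i div 2 ^ Suc L = k div 2 ^ Suc L")
  case False
  define K where "K = (2::nat) ^ Suc L"
  define q where "q = k div K"
  have "K > 0" unfolding K_def by simp
  have "i div K \<le> q" unfolding q_def using assms by (simp add: div_le_mono)
  with False have "i div K < q" unfolding q_def K_def by simp
  then have "i < q * K" using div_less_iff_less_mult[OF \<open>K > 0\<close>] by simp
  moreover have "q * K \<le> k" unfolding q_def by simp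
  moreover have "K = 2 * 2 ^ L" unfolding K_def by simp
  ultimately have "(i + 2 ^ L) div K = q" "(k + 2 ^ L) div K = q"
    using assms(2) by (intro div_nat_eqI; simp add: algebra_simps)+
  then show ?thesis unfolding K_def by auto
qed auto

definition split_point :: "nat \<Rightarrow> nat \<Rightarrow> nat \<Rightarrow> nat" where
  "split_point s t i = dyadic_mid t (i + s) - s"

lemma split_point_separates:
  fixes i k :: nat
  assumes "i < k" "k < i + 2 ^ L"
  shows "\<exists>s\<in>{0, 2 ^ L}. \<exists>t\<le>L. i < split_point s t i \<and> split_point s t i \<le> k \<and>
           (\<forall>l\<in>{i..k}. split_point s t l = split_point s t i)"
proof -
  obtain s where s: "s \<in> {0, 2 ^ L}" "(i + s) div 2 ^ Suc L = (k + s) div 2 ^ Suc L"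
    using shift_into_dyadic_block[OF assms] by blast
  obtain t where t: "t \<le> L" "i + s < dyadic_mid t (i + s)" "dyadic_mid t (i + s) \<le> k + s"
    and const: "\<forall>l\<in>{i + s..k + s}. dyadic_mid t l = dyadic_mid t (i + s)"
    using dyadic_mid_separates[OF add_strict_right_mono[OF assms(1)] s(2)] by blast
  show ?thesis
  proof (intro bexI[of _ s] exI[of _ t] conjI ballI)
    show "i < split_point s t i" "split_point s t i \<le> k"
      using t(2,3) unfolding split_point_def by linarith+
    fix l assume "l \<in> {i..k}"
    then have "dyadic_mid t (l + s) = dyadic_mid t (i + s)" by (intro const[rule_format]) simp
    then show "split_point s t l = split_point s t i" unfolding split_point_def by simp
  qed (use s(1) t(1) in auto)
qed

section \<open>Windows of ranks\<close>

definition rank_in :: "nat set \<Rightarrow> nat \<Rightarrow> nat" where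
  "rank_in B x = card {y\<in>B. y < x}"

lemma rank_in_less: "finite B \<Longrightarrow> x \<in> B \<Longrightarrow> x < y \<Longrightarrow> rank_in B x < rank_in B y"
  unfolding rank_in_def by (rule psubset_card_mono) auto

lemma rank_in_less_iff: "finite B \<Longrightarrow> x \<in> B \<Longrightarrow> y \<in> B \<Longrightarrow> rank_in B x < rank_in B y \<longleftrightarrow> x < y"
  by (metis less_asym nat_neq_iff rank_in_less)

lemma rank_in_le_iff: "finite B \<Longrightarrow> x \<in> B \<Longrightarrow> y \<in> B \<Longrightarrow> rank_in B x \<le> rank_in B y \<longleftrightarrow> x \<le> y"
  by (meson not_less rank_in_less_iff)

lemma bij_betw_rank_in:
  assumes "finite B" shows "bij_betw (rank_in B) B {..<card B}"
proof -
  have "inj_on (rank_in B) B" unfolding inj_on_def by (metis assms nat_neq_iff rank_in_less)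
  moreover have "rank_in B ` B \<subseteq> {..<card B}"
    unfolding rank_in_def using assms by (auto intro!: psubset_card_mono)
  ultimately show ?thesis unfolding bij_betw_def
    by (metis card_image card_lessThan card_subset_eq finite_lessThan)
qed

lemma rank_in_diff:
  assumes "finite B" "a \<in> B" "c \<in> B" "a < c"
  shows "rank_in B c = rank_in B a + 1 + card {y\<in>B. a < y \<and> y < c}"
proof -
  have "{y\<in>B. y < c} = {y\<in>B. y < a} \<union> (insert a {y\<in>B. a < y \<and> y < c})" using assms by auto
  moreover have "card ({y\<in>B. y < a} \<union> (insert a {y\<in>B. a < y \<and> y < c})) =
      card {y\<in>B. y < a} + card (insert a {y\<in>B. a < y \<and> y < c})"
    using assms by (intro card_Un_disjoint) auto
  ultimately show ?thesis unfolding rank_in_def using assms by simp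
qed

definition rank_window :: "nat \<Rightarrow> nat \<Rightarrow> nat set" where
  "rank_window L i = insert i ((\<lambda>(s, t, e). split_point s t i - e) ` ({0, 2 ^ L} \<times> {..L} \<times> {0, 1}))"

lemma card_rank_window: "card (rank_window L i) \<le> 4 * L + 5"
proof -
  define P where "P = ({0::nat, 2 ^ L} \<times> {..L} \<times> {0::nat, 1})"
  have "card P \<le> 2 * (Suc L * 2)"
    unfolding P_def card_cartesian_product by (intro mult_mono) (auto simp: card_insert_if)
  moreover have "card (rank_window L i) \<le> card ((\<lambda>(s, t, e). split_point s t i - e) ` P) + 1"
    unfolding rank_window_def P_def by (simp add: card_insert_if)
  moreover have "card ((\<lambda>(s, t, e). split_point s t i - e) ` P) \<le> card P"
    by (rule card_image_le) (simp add: P_def)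
  ultimately have "card (rank_window L i) \<le> 2 * (Suc L * 2) + 1" by linarith
  then show ?thesis by simp
qed

definition window :: "nat set \<Rightarrow> nat \<Rightarrow> nat \<Rightarrow> nat set" where
  "window B L x = {y\<in>B. rank_in B y \<in> rank_window L (rank_in B x)}"

lemma window_subset: "window B L x \<subseteq> B"
  unfolding window_def by auto

lemma self_in_window: "x \<in> B \<Longrightarrow> x \<in> window B L x"
  unfolding window_def rank_window_def by auto

lemma card_window:
  assumes "finite B" shows "card (window B L x) \<le> 4 * L + 5"
proof -
  have "inj_on (rank_in B) (window B L x)"
    using bij_betw_imp_inj_on[OF bij_betw_rank_in[OF assms]] window_subset by (rule inj_on_subset)
  then have "card (window B L x) = card (rank_in B ` window B L x)" by (simp add: card_image)
  also have "\<dots> \<le> card (rank_window L (rank_in B x))"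
    by (rule card_mono) (auto simp: rank_window_def window_def)
  finally show ?thesis using card_rank_window le_trans by blast
qed

lemma adjacent_pair_in_windows:
  assumes fin: "finite B" and uv: "u \<in> B" "v \<in> B" "u < v"
    and close: "rank_in B v < rank_in B u + 2 ^ L"
  shows "\<exists>w1\<in>B. \<exists>w2\<in>B. u \<le> w1 \<and> w1 < w2 \<and> w2 \<le> v \<and> (\<forall>y\<in>B. \<not> (w1 < y \<and> y < w2)) \<and>
     (\<forall>y\<in>B. u \<le> y \<and> y \<le> v \<longrightarrow> w1 \<in> window B L y \<and> w2 \<in> window B L y)"
proof -
  let ?r = "rank_in B"
  have "?r u < ?r v" using rank_in_less[OF fin uv(1,3)] .
  then obtain s t where st: "s \<in> {0, 2 ^ L}" "t \<le> L"
    and sep: "?r u < split_point s t (?r u)" "split_point s t (?r u) \<le> ?r v"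
    and const: "\<forall>l\<in>{?r u..?r v}. split_point s t l = split_point s t (?r u)"
    using split_point_separates[of "?r u" "?r v" L] close by blast
  define j where "j = split_point s t (?r u)"
  have "j < card B" using sep(2) bij_betw_apply[OF bij_betw_rank_in[OF fin] uv(2)] unfolding j_def by simp
  then obtain w1 w2 where w: "w1 \<in> B" "?r w1 = j - 1" "w2 \<in> B" "?r w2 = j"
    using bij_betw_inv_into_right[OF bij_betw_rank_in[OF fin]] bij_betw_imp_surj_on[OF bij_betw_rank_in[OF fin]]
    by (metis imageE lessThan_iff less_imp_diff_less)
  have order: "u \<le> w1" "w1 < w2" "w2 \<le> v"
    using rank_in_le_iff[OF fin uv(1) w(1)] rank_in_less_iff[OF fin w(1) w(3)]
      rank_in_le_iff[OF fin w(3) uv(2)] w sep unfolding j_def by auto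
  have adjacent: "\<not> (w1 < y \<and> y < w2)" if "y \<in> B" for y
    using rank_in_less_iff[OF fin w(1) that] rank_in_less_iff[OF fin that w(3)] w by auto
  have "w1 \<in> window B L y \<and> w2 \<in> window B L y" if "y \<in> B" "u \<le> y" "y \<le> v" for y
  proof -
    have "?r y \<in> {?r u..?r v}" using rank_in_le_iff[OF fin] that uv by auto
    then have "split_point s t (?r y) = j" using const unfolding j_def by blast
    then have "j - 1 \<in> rank_window L (?r y)" "j \<in> rank_window L (?r y)"
      unfolding rank_window_def using st
      by (intro insertI2 image_eqI[of _ _ "(s, t, 1)"] image_eqI[of _ _ "(s, t, 0)"]; simp)+
    then show ?thesis unfolding window_def using w by auto
  qed
  then show ?thesis using w(1,3) order adjacent by blast
qed

lemma convex_on_good_points: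
  fixes g :: "nat \<Rightarrow> real"
  assumes fin: "finite B"
    and G: "G = {x\<in>B. convex_on_pts (window B L x) g}"
    and few_bad: "card (B - G) + 3 \<le> 2 ^ L"
  shows "convex_on_pts G g"
proof (rule convex_on_pts_if_consecutive)
  fix a b c assume abc: "a \<in> G" "b \<in> G" "c \<in> G" "a < b" "b < c"
    and gap_ab: "\<forall>d\<in>G. \<not> (a < d \<and> d < b)" and gap_bc: "\<forall>d\<in>G. \<not> (b < d \<and> d < c)"
  have inB: "a \<in> B" "b \<in> B" "c \<in> B" using abc G by auto
  have "{y\<in>B. a < y \<and> y < c} \<subseteq> insert b (B - G)" using gap_ab gap_bc by auto
  then have "card {y\<in>B. a < y \<and> y < c} \<le> card (insert b (B - G))"
    using fin by (intro card_mono) auto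
  also have "\<dots> \<le> card (B - G) + 1" using fin by (simp add: card_insert_if)
  finally have "rank_in B c < rank_in B a + 2 ^ L"
    using rank_in_diff[OF fin inB(1,3)] abc few_bad by linarith
  moreover have "rank_in B a \<le> rank_in B b" "rank_in B b \<le> rank_in B c"
    using rank_in_le_iff[OF fin] inB abc by auto
  ultimately have close: "rank_in B v < rank_in B u + 2 ^ L"
    if "u \<in> {a, b, c}" "v \<in> {a, b, c}" "u < v" for u v
    using that rank_in_less_iff[OF fin] inB by auto
  show "slope g a b \<le> slope g b c"
  proof (rule slope_le_slope_of_covering_windows[where T = "window B L"])
    show "convex_on_pts (window B L x) g \<and> x \<in> window B L x" if "x \<in> {a, b, c}" for x
      using that abc inB G self_in_window by auto
    fix u v assume uv: "u \<in> {a, b, c}" "v \<in> {a, b, c}" "u < v"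
    then have "u \<in> B" "v \<in> B" using inB by auto
    from adjacent_pair_in_windows[OF fin this uv(3) close[OF uv]] inB
    show "\<exists>w1 w2. u \<le> w1 \<and> w1 < w2 \<and> w2 \<le> v \<and> \<not> (w1 < b \<and> b < w2) \<and>
        (\<forall>y\<in>{a, b, c}. u \<le> y \<and> y \<le> v \<longrightarrow> w1 \<in> window B L y \<and> w2 \<in> window B L y)"
      by blast
  qed (use abc in auto)
qed

section \<open>The tester\<close>

definition convexity_tester :: "nat set \<Rightarrow> nat \<Rightarrow> (nat set \<times> ((nat \<Rightarrow> real) \<Rightarrow> bool)) pmf" where
  "convexity_tester B L = map_pmf (\<lambda>x. (window B L x, convex_on_pts (window B L x))) (pmf_of_set B)"

context
  fixes B :: "nat set" and L :: nat
  assumes fin: "finite B" and ne: "B \<noteq> {}"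
begin

lemma nonadaptive_convexity_tester: "nonadaptive_alg B (4 * L + 5) (convexity_tester B L)"
  unfolding nonadaptive_alg_def
proof
  fix p assume "p \<in> set_pmf (convexity_tester B L)"
  then obtain x where p: "p = (window B L x, convex_on_pts (window B L x))"
    unfolding convexity_tester_def using fin ne by auto
  have "window B L x \<subseteq> B" "finite (window B L x)" "card (window B L x) \<le> 4 * L + 5"
    using window_subset finite_subset[OF window_subset fin] card_window[OF fin] by blast+
  moreover have "\<forall>g h. (\<forall>y\<in>window B L x. g y = h y) \<longrightarrow>
      convex_on_pts (window B L x) g = convex_on_pts (window B L x) h"
    using convex_on_pts_cong by blast
  ultimately show "case p of (Q, D) \<Rightarrow> Q \<subseteq> B \<and> finite Q \<and> card Q \<le> 4 * L + 5 \<and>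
      (\<forall>g h. (\<forall>x\<in>Q. g x = h x) \<longrightarrow> D g = D h)"
    unfolding p prod.case by blast
qed

lemma accept_prob_convexity_tester:
  "accept_prob (convexity_tester B L) g =
     real (card {x\<in>B. convex_on_pts (window B L x) g}) / real (card B)"
proof -
  have "accept_prob (convexity_tester B L) g = measure (pmf_of_set B) {x. convex_on_pts (window B L x) g}"
    unfolding accept_prob_def convexity_tester_def by (simp add: vimage_def)
  also have "\<dots> = real (card (B \<inter> {x. convex_on_pts (window B L x) g})) / real (card B)"
    using measure_pmf_of_set[OF ne fin] by simp
  finally show ?thesis by (simp add: Collect_conj_eq Int_commute)
qed

lemma convexity_tester_accepts_convex:
  "convex_on_pts B g \<Longrightarrow> accept_prob (convexity_tester B L) g = 1"
  using accept_prob_convexity_tester[of g] convex_on_pts_subset[OF _ window_subset] fin ne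
  by simp

lemma convexity_tester_rejects_far:
  assumes far: "eps_far_from_convex B eps g" and large: "eps * real (card B) + 3 \<le> 2 ^ L"
  shows "eps \<le> 1 - accept_prob (convexity_tester B L) g"
proof (rule ccontr)
  define G where "G = {x\<in>B. convex_on_pts (window B L x) g}"
  have "G \<subseteq> B" "card B > 0" unfolding G_def using fin ne by (auto simp: card_gt_0_iff)
  assume "\<not> eps \<le> 1 - accept_prob (convexity_tester B L) g"
  then have "real (card B) - real (card G) < eps * real (card B)"
    using accept_prob_convexity_tester[of g] \<open>card B > 0\<close> unfolding G_def by (simp add: field_simps)
  then have bad: "real (card (B - G)) < eps * real (card B)"
    using card_Diff_subset[OF finite_subset[OF \<open>G \<subseteq> B\<close> fin] \<open>G \<subseteq> B\<close>] card_mono[OF fin \<open>G \<subseteq> B\<close>]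
    by (simp add: of_nat_diff)
  then have "real (card (B - G) + 3) \<le> 2 ^ L" using large by simp
  then have "card (B - G) + 3 \<le> 2 ^ L" by (metis of_nat_le_iff of_nat_numeral of_nat_power)
  then have "convex_on_pts G g" using convex_on_good_points[OF fin G_def] by blast
  then obtain h where h: "convex_on_pts UNIV h" "\<forall>x\<in>G. h x = g x"
    using convex_on_pts_extension[OF finite_subset[OF \<open>G \<subseteq> B\<close> fin]] by blast
  have "card {x\<in>B. g x \<noteq> h x} \<le> card (B - G)" using h(2) fin by (intro card_mono) auto
  then have "real (card {x\<in>B. g x \<noteq> h x}) < eps * real (card B)" using bad by linarith
  then show False using far convex_on_pts_subset[OF h(1)] unfolding eps_far_from_convex_def by fastforce
qed

end

lemma log_query_bound:
  fixes X :: real assumes "X > 0"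
  defines "L \<equiv> nat \<lceil>log 2 (X + 3)\<rceil>"
  shows "X + 3 \<le> 2 ^ L" and "real (4 * L + 5) \<le> 21 * max 1 (log 2 X)"
proof -
  have "0 < log 2 (X + 3)" using assms by simp
  then have L: "real L = of_int \<lceil>log 2 (X + 3)\<rceil>" unfolding L_def by simp
  have "X + 3 = 2 powr log 2 (X + 3)" using assms by simp
  also have "\<dots> \<le> 2 powr real L" using L by (intro powr_mono) auto
  finally show "X + 3 \<le> 2 ^ L" by (simp add: powr_realpow)
  have "log 2 (X + 3) \<le> log 2 (4 * max 1 X)" using assms by (intro log_mono) auto
  also have "\<dots> = log 2 4 + log 2 (max 1 X)" by (simp add: log_mult)
  also have "log 2 (4::real) = 2" using log_pow_cancel[of 2 2] by simp
  also have "log 2 (max 1 X) \<le> max 1 (log 2 X)" using assms by (simp add: max_def)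
  finally have "real L \<le> 3 + max 1 (log 2 X)" using L by linarith
  then show "real (4 * L + 5) \<le> 21 * max 1 (log 2 X)" by simp
qed

theorem mainTheorem7:
  shows "\<exists>C::real. C > 0 \<and>
    (\<forall>(n::nat) (B::nat set) (eps::real).
       B \<noteq> {} \<and> B \<subseteq> {1..n} \<and> 0 < eps \<and> eps < 1 \<longrightarrow>
       (\<exists>A q. nonadaptive_alg B q A \<and>
          real q \<le> C * max 1 (log 2 (eps * real (card B))) \<and>
          (\<forall>g. convex_on_pts B g \<longrightarrow> accept_prob A g = 1) \<and>
          (\<forall>g. eps_far_from_convex B eps g \<longrightarrow> 1 - accept_prob A g \<ge> eps)))"
proof (intro exI[of _ 21] conjI allI impI)
  fix n :: nat and B :: "nat set" and eps :: real
  assume asm: "B \<noteq> {} \<and> B \<subseteq> {1..n} \<and> 0 < eps \<and> eps < 1"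
  then have fin: "finite B" and ne: "B \<noteq> {}" using finite_subset by blast+
  have "eps * real (card B) > 0" using asm fin by (simp add: card_gt_0_iff)
  define L where "L = nat \<lceil>log 2 (eps * real (card B) + 3)\<rceil>"
  note bounds = log_query_bound[OF \<open>eps * real (card B) > 0\<close>, folded L_def]
  show "\<exists>A q. nonadaptive_alg B q A \<and>
          real q \<le> 21 * max 1 (log 2 (eps * real (card B))) \<and>
          (\<forall>g. convex_on_pts B g \<longrightarrow> accept_prob A g = 1) \<and>
          (\<forall>g. eps_far_from_convex B eps g \<longrightarrow> 1 - accept_prob A g \<ge> eps)"
    using nonadaptive_convexity_tester[OF fin ne] bounds(2)
      convexity_tester_accepts_convex[OF fin ne] convexity_tester_rejects_far[OF fin ne _ bounds(1)]
    by blast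
qed simp

end
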